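(* Let $x,y \in A$ be a regular exact pair of zero divisors. Furthermore, let $a \in A$ be weakly regular on the $A$-module $A/(x,y)$, and let $b \in A$ be any element. Then the $A$-submodule \[ Q_{\gamma_{ab},\gamma_a} = \big\{\, \psi \in \operatorname{M}_2(A) \,\big|\, \psi\gamma_{ab}=\gamma_a\xi \text{ for some } \xi \in \operatorname{M}_2(A) \,\big\} \] of $\operatorname{M}_2(A)$ is generated by the following five matrices: \[ \psi_1 = \begin{pmatrix} 0 & 0 \\ 0 & x \end{pmatrix},\ \psi_2 = \begin{pmatrix} 1 & 0 \\ 0 & b \end{pmatrix},\ \psi_3 = \begin{pmatrix} 0 & x \\ 0 & 0 \end{pmatrix},\ \psi_4 = \begin{pmatrix} a & 0 \\ y & 0 \end{pmatrix},\ \psi_5 = \begin{pmatrix} 0 & a \\ 0 & y \end{pmatrix}. \]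
   Context: $A$ is a commutative noetherian local ring. Two non-units $x,y\in A$ form an exact pair of zero divisors if $\operatorname{Ann}_A(x)=(y)$ and $\operatorname{Ann}_A(y)=(x)$; the pair is regular if moreover $(x)\cap(y)=0$ (equivalently, $x$ is regular on $A/(y)$, equivalently $y$ is regular on $A/(x)$). An element $a$ is weakly regular on an $A$-module $M$ if multiplication by $a$ on $M$ is injective. For $c\in A$, $\gamma_c$ is the $2\times 2$ matrix $\gamma_c=\begin{pmatrix} x & c\\ 0 & y\end{pmatrix}$, and $\operatorname{M}_2(A)$ denotes the $A$-module of $2\times 2$ matrices over $A$. *)

theory Defs
  imports "HOL-Analysis.Analysis"
begin

definition is_ideal :: "'a::comm_ring_1 set \<Rightarrow> bool" where
  "is_ideal I \<longleftrightarrow> 0 \<in> I \<and> (\<forall>u\<in>I. \<forall>v\<in>I. u + v \<in> I) \<and> (\<forall>r. \<forall>u\<in>I. r * u \<in> I)"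

definition ideal_gen :: "'a::comm_ring_1 set \<Rightarrow> 'a set" where
  "ideal_gen S = {\<Sum>s\<in>F. r s * s | F r. finite F \<and> F \<subseteq> S}"

definition noetherian_ring :: "'a::comm_ring_1 itself \<Rightarrow> bool" where
  "noetherian_ring _ \<longleftrightarrow> (\<forall>I::'a set. is_ideal I \<longrightarrow> (\<exists>F. finite F \<and> F \<subseteq> I \<and> I = ideal_gen F))"

text \<open>Local: nontrivial and the non-units are closed under addition (they then form the unique maximal ideal).\<close>
definition local_ring :: "'a::comm_ring_1 itself \<Rightarrow> bool" where
  "local_ring _ \<longleftrightarrow> (1::'a) \<noteq> 0 \<and>
     (\<forall>u v::'a. \<not> u dvd 1 \<longrightarrow> \<not> v dvd 1 \<longrightarrow> \<not> (u + v) dvd 1)"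

definition Ann :: "'a::comm_ring_1 \<Rightarrow> 'a set" where
  "Ann x = {z. z * x = 0}"

definition principal :: "'a::comm_ring_1 \<Rightarrow> 'a set" where
  "principal x = {x * r | r. True}"

definition exact_pair :: "'a::comm_ring_1 \<Rightarrow> 'a \<Rightarrow> bool" where
  "exact_pair x y \<longleftrightarrow> \<not> x dvd 1 \<and> \<not> y dvd 1 \<and> Ann x = principal y \<and> Ann y = principal x"

definition regular_exact_pair :: "'a::comm_ring_1 \<Rightarrow> 'a \<Rightarrow> bool" where
  "regular_exact_pair x y \<longleftrightarrow> exact_pair x y \<and> principal x \<inter> principal y = {0}"

definition weakly_regular_mod2 :: "'a::comm_ring_1 \<Rightarrow> 'a \<Rightarrow> 'a \<Rightarrow> bool" where
  "weakly_regular_mod2 a x y \<longleftrightarrow> (\<forall>z. a * z \<in> ideal_gen {x, y} \<longrightarrow> z \<in> ideal_gen {x, y})"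

text \<open>2x2 matrices over A as 'a^2^2; M $ i $ j is the (i,j) entry.\<close>
definition mat2 :: "'a::zero \<Rightarrow> 'a \<Rightarrow> 'a \<Rightarrow> 'a \<Rightarrow> 'a^2^2" where
  "mat2 p q r s = vector [vector [p, q], vector [r, s]]"

definition gamma :: "'a::comm_ring_1 \<Rightarrow> 'a \<Rightarrow> 'a \<Rightarrow> 'a^2^2" where
  "gamma x y c = mat2 x c 0 y"

definition mscale :: "'a::comm_ring_1 \<Rightarrow> 'a^2^2 \<Rightarrow> 'a^2^2" where
  "mscale c M = (\<chi> i j. c * M $ i $ j)"

end

theory Submission
  imports Defs
begin

text \<open>
  Write \<open>\<psi> = (p q; r s)\<close> and \<open>\<xi> = (e\<^sub>1\<^sub>1 e\<^sub>1\<^sub>2; e\<^sub>2\<^sub>1 e\<^sub>2\<^sub>2)\<close>. Comparing entries, \<open>\<psi> \<gamma>\<^sub>a\<^sub>b = \<gamma>\<^sub>a \<xi>\<close> gives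
  \<open>r x = y e\<^sub>2\<^sub>1\<close>, \<open>r ab + s y = y e\<^sub>2\<^sub>2\<close> and \<open>p ab + q y = x e\<^sub>1\<^sub>2 + a e\<^sub>2\<^sub>2\<close>.
  Since \<open>(x) \<inter> (y) = 0\<close>, the first forces \<open>r x = 0\<close>, so \<open>r = t y\<close>; the second then gives
  \<open>s \<equiv> e\<^sub>2\<^sub>2 - t ab\<close> modulo \<open>(x)\<close>. Substituting into the third shows that \<open>a ((p - ta) b - s)\<close>
  lies in \<open>(x, y)\<close>, so by weak regularity \<open>(p - ta) b - s = x m + y n\<close>. Feeding this back,
  \<open>y (q + an)\<close> lies in \<open>(x) \<inter> (y) = 0\<close>, whence \<open>q + an \<in> (x)\<close>. These are exactly the
  coefficients expressing \<open>\<psi>\<close> in \<open>\<psi>\<^sub>1, \<dots>, \<psi>\<^sub>5\<close>; the converse inclusion is a direct computation.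
\<close>

lemma mat2_nth [simp]:
  "mat2 p q r s $ 1 $ 1 = p" "mat2 p q r s $ 1 $ 2 = q"
  "mat2 p q r s $ 2 $ 1 = r" "mat2 p q r s $ 2 $ 2 = s"
  by (simp_all add: mat2_def)

lemma mat2_cases:
  obtains p q r s where "(M::'a::zero^2^2) = mat2 p q r s"
proof -
  have "M = mat2 (M$1$1) (M$1$2) (M$2$1) (M$2$2)"
    by (simp add: vec_eq_iff forall_2)
  then show thesis by (rule that)
qed

lemma mat2_eq_iff: "mat2 p q r s = mat2 p2 q2 r2 s2 \<longleftrightarrow> p = p2 \<and> q = q2 \<and> r = r2 \<and> s = s2"
  by (auto simp add: vec_eq_iff forall_2)

lemma mat2_mult:
  "mat2 p q r s ** mat2 p2 q2 r2 s2 =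
   mat2 (p*p2 + q*r2) (p*q2 + q * s2) (r*p2 + s*r2) (r*q2 + s * s2)"
  by (simp add: vec_eq_iff forall_2 matrix_matrix_mult_def sum_2)

lemma mat2_add: "mat2 p q r s + mat2 p2 q2 r2 s2 = mat2 (p+p2) (q+q2) (r+r2) (s+s2)"
  by (simp add: vec_eq_iff forall_2)

lemma mscale_mat2: "mscale c (mat2 p q r s) = mat2 (c*p) (c*q) (c*r) (c * s)"
  by (simp add: vec_eq_iff forall_2 mscale_def)

lemma ideal_gen_pair_iff:
  fixes x y :: "'a::comm_ring_1"
  shows "z \<in> ideal_gen {x, y} \<longleftrightarrow> (\<exists>m n. z = x*m + y*n)"
proof
  assume "z \<in> ideal_gen {x, y}"
  then obtain F r where F: "finite F" "F \<subseteq> {x, y}" and z: "z = (\<Sum>s\<in>F. r s * s)"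
    unfolding ideal_gen_def by blast
  have "\<exists>m n. (\<Sum>s\<in>F. r s * s) = x*m + y*n"
    using F
  proof (induction F rule: finite_induct)
    case empty
    show ?case by (intro exI[of _ 0]) simp
  next
    case (insert u F)
    then obtain m n where mn: "(\<Sum>s\<in>F. r s * s) = x*m + y*n" by auto
    from insert consider "u = x" | "u = y" by auto
    then show ?case
    proof cases
      case 1
      with insert mn show ?thesis
        by (intro exI[of _ "m + r u"] exI[of _ n]) (simp add: algebra_simps)
    next
      case 2
      with insert mn show ?thesis
        by (intro exI[of _ m] exI[of _ "n + r u"]) (simp add: algebra_simps)
    qed
  qed
  with z show "\<exists>m n. z = x*m + y*n" by simp
next
  assume "\<exists>m n. z = x*m + y*n"
  then obtain m n where z: "z = x*m + y*n" by blast
  show "z \<in> ideal_gen {x, y}"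
  proof (cases "x = y")
    case True
    with z show ?thesis unfolding ideal_gen_def
      by (intro CollectI exI[of _ "{x}"] exI[of _ "\<lambda>_. m + n"]) (simp add: algebra_simps)
  next
    case False
    with z show ?thesis unfolding ideal_gen_def
      by (intro CollectI exI[of _ "{x, y}"] exI[of _ "\<lambda>s. if s = x then m else n"])
        (simp add: algebra_simps)
  qed
qed

lemma weakly_regular_mod2D:
  assumes "weakly_regular_mod2 a x y" and "a * z = x*m + y*n"
  obtains m' n' where "z = x*m' + y*n'"
  using assms unfolding weakly_regular_mod2_def ideal_gen_pair_iff by blast

lemma exact_pair_sym: "exact_pair x y \<longleftrightarrow> exact_pair y x"
  unfolding exact_pair_def by blast

lemma exact_pair_mult_eq_0_iff:
  assumes "exact_pair x y"
  shows "z * x = 0 \<longleftrightarrow> (\<exists>t. z = y * t)"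
  using assms unfolding exact_pair_def Ann_def principal_def by (auto simp: set_eq_iff)

lemma regular_exact_pair_common_multiple_eq_0:
  assumes "regular_exact_pair x y" and "x * u = y * v"
  shows "x * u = 0"
  using assms unfolding regular_exact_pair_def principal_def by blast

lemma mult_gamma_eq_gamma_mult_iff:
  "(\<exists>\<xi>. mat2 p q r s ** gamma x y c = gamma x y a ** \<xi>) \<longleftrightarrow>
   (\<exists>e11 e12 e21 e22. p*x = x*e11 + a*e21 \<and> p*c + q*y = x*e12 + a*e22
      \<and> r*x = y*e21 \<and> r*c + s*y = y*e22)"
proof -
  have "(\<exists>\<xi>. mat2 p q r s ** gamma x y c = gamma x y a ** \<xi>) \<longleftrightarrow>
        (\<exists>e11 e12 e21 e22. mat2 p q r s ** gamma x y c = gamma x y a ** mat2 e11 e12 e21 e22)"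
    by (metis mat2_cases)
  then show ?thesis
    unfolding gamma_def mat2_mult mat2_eq_iff by simp
qed

lemma generators_lin_comb_eq_mat2:
  "mscale r1 (mat2 0 0 0 x) + mscale r2 (mat2 1 0 0 b) + mscale r3 (mat2 0 x 0 0)
     + mscale r4 (mat2 a 0 y 0) + mscale r5 (mat2 0 a 0 y) =
   mat2 (r2 + r4*a) (r3*x + r5*a) (r4*y) (r1*x + r2*b + r5*y)"
  by (simp add: mscale_mat2 mat2_add)

lemma generators_lin_comb_factor:
  fixes x y a b :: "'a::comm_ring_1"
  shows "\<exists>e11 e12 e21 e22.
     (r2 + r4*a)*x = x*e11 + a*e21 \<and> (r2 + r4*a)*(a*b) + (r3*x + r5*a)*y = x*e12 + a*e22 \<and>
     (r4*y)*x = y*e21 \<and> (r4*y)*(a*b) + (r1*x + r2*b + r5*y)*y = y*e22"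
  by (intro exI[of _ r2] exI[of _ "r3*y - r1*a"] exI[of _ "r4*x"]
      exI[of _ "r1*x + r2*b + r4*a*b + r5*y"]) (simp add: algebra_simps)

lemma factor_entries_lin_comb:
  fixes x y a b :: "'a::comm_ring_1"
  assumes reg: "regular_exact_pair x y" and wr: "weakly_regular_mod2 a x y"
    and top: "p*(a*b) + q*y = x*e12 + a*e22"
    and bottom_left: "r*x = y*e21" and bottom_right: "r*(a*b) + s*y = y*e22"
  shows "\<exists>r1 r2 r3 r4 r5. p = r2 + r4*a \<and> q = r3*x + r5*a \<and> r = r4*y \<and> s = r1*x + r2*b + r5*y"
proof -
  have exact: "exact_pair x y" "exact_pair y x"
    using reg exact_pair_sym unfolding regular_exact_pair_def by blast+
  from bottom_left have "x * r = y * e21" by (simp add: mult.commute)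
  with reg have "r * x = 0" by (metis regular_exact_pair_common_multiple_eq_0 mult.commute)
  then obtain t where t: "r = y * t" using exact_pair_mult_eq_0_iff[OF exact(1)] by blast
  have "(t*(a*b) + s - e22) * y = 0" using bottom_right t by (simp add: algebra_simps)
  then obtain w where w: "t*(a*b) + s - e22 = x * w"
    using exact_pair_mult_eq_0_iff[OF exact(2)] by blast
  have e22: "e22 = t*(a*b) + s - x * w" using w by (simp add: algebra_simps)
  have "a * ((p - t*a)*b - s) = x*(e12 - a*w) + y*(-q)"
    using top unfolding e22 by (simp add: algebra_simps)
  then obtain m n where mn: "(p - t*a)*b - s = x*m + y*n"
    using wr by (blast elim: weakly_regular_mod2D)
  have yq: "x*(e12 - a*w - a*m) = y*(q + a*n)"
    using top mn unfolding e22 by (simp add: algebra_simps)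
  with reg have "x*(e12 - a*w - a*m) = 0" by (rule regular_exact_pair_common_multiple_eq_0)
  with yq have "(q + a*n) * y = 0" by (simp add: mult.commute)
  then obtain k where k: "q + a*n = x * k" using exact_pair_mult_eq_0_iff[OF exact(2)] by blast
  show ?thesis
    using t k mn
    by (intro exI[of _ "-m"] exI[of _ "p - t*a"] exI[of _ k] exI[of _ t] exI[of _ "-n"])
      (simp add: algebra_simps)
qed

theorem lemma7p6:
  fixes x y a b :: "'a::comm_ring_1"
  assumes "noetherian_ring TYPE('a)" and "local_ring TYPE('a)"
    and "regular_exact_pair x y"
    and "weakly_regular_mod2 a x y"
  shows "{\<psi>::'a^2^2. \<exists>\<xi>. \<psi> ** gamma x y (a * b) = gamma x y a ** \<xi>} =
         {mscale r1 (mat2 0 0 0 x) + mscale r2 (mat2 1 0 0 b) + mscale r3 (mat2 0 x 0 0)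
          + mscale r4 (mat2 a 0 y 0) + mscale r5 (mat2 0 a 0 y) | r1 r2 r3 r4 r5. True}"
  (is "?Q = ?S")
proof (rule set_eqI)
  fix \<psi> :: "'a^2^2"
  obtain p q r s where \<psi>: "\<psi> = mat2 p q r s" by (rule mat2_cases)
  have "(\<exists>\<xi>. mat2 p q r s ** gamma x y (a * b) = gamma x y a ** \<xi>) \<longleftrightarrow>
        (\<exists>r1 r2 r3 r4 r5. p = r2 + r4*a \<and> q = r3*x + r5*a \<and> r = r4*y \<and> s = r1*x + r2*b + r5*y)"
    (is "?factors \<longleftrightarrow> ?coeffs")
  proof
    show "?factors \<Longrightarrow> ?coeffs"
      unfolding mult_gamma_eq_gamma_mult_iff using factor_entries_lin_comb[OF assms(3,4)] by blast
    show "?coeffs \<Longrightarrow> ?factors"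
      unfolding mult_gamma_eq_gamma_mult_iff using generators_lin_comb_factor by blast
  qed
  then show "\<psi> \<in> ?Q \<longleftrightarrow> \<psi> \<in> ?S"
    unfolding \<psi> mem_Collect_eq generators_lin_comb_eq_mat2 mat2_eq_iff by blast
qed

end
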